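(* Let $m,n\ge1$ and $k$ be integers with $k^n\equiv1\pmod m$, let $G=\langle a,b\mid a^m=b^n=1,\ b^{-1}ab=a^k\rangle$, let $t=|k|_m$ and $n=rt$. Let $s$ be a prime with $\gcd(s,m)=1$, $\zeta$ a primitive $m$-th root of unity in $\overline{\mathbb{F}}_s$, and $q$ a power of $s$ with $q\equiv k^j\pmod m$ for some $j$. Assume $F=\mathbb{F}_q$ contains a primitive $r$-th root of unity $\eta$. Then for every integer $c$, the $t$-dimensional representation of $G$ over $\overline{\mathbb{F}}_s$ given by $$a\mapsto\mathrm{diag}(\zeta,\zeta^k,\dots,\zeta^{k^{t-1}}),$$ $$b\mapsto\text{the } t\times t \text{ matrix with entries } 1 \text{ in positions } (i+1,i) \ (1\le i\le t-1),\ \eta^c \text{ in position } (1,t),\ 0 \text{ elsewhere},$$ is realizable over $F$.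
   Context: $|k|_m$ denotes the multiplicative order of $k$ modulo $m$. A representation over $\overline{\mathbb{F}}_s$ is realizable over $\mathbb{F}_q$ if it is equivalent (over $\overline{\mathbb{F}}_s$) to a matrix representation with all matrix entries in $\mathbb{F}_q$. *)

theory Defs
  imports "Berlekamp_Zassenhaus.Finite_Field" "HOL-Algebra.Algebraic_Closure_Type"
    "Jordan_Normal_Form.Matrix" "HOL-Number_Theory.Number_Theory"
begin

text \<open>The algebraic closure of F_s is the type ('s mod_ring) alg_closure, where
  's is a type of prime cardinality s.  Matrices are Jordan_Normal_Form matrices,
  indexed from 0.\<close>

text \<open>The subfield F_q of an algebraically closed field of characteristic s:
  the roots of x^q - x.\<close>
definition finite_subfield :: "nat \<Rightarrow> 'a::field set" where
  "finite_subfield q = {x. x ^ q = x}"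

definition primitive_root_of_unity :: "nat \<Rightarrow> 'a::field \<Rightarrow> bool" where
  "primitive_root_of_unity n z \<longleftrightarrow> z ^ n = 1 \<and> (\<forall>i. 0 < i \<and> i < n \<longrightarrow> z ^ i \<noteq> 1)"

text \<open>Image of a representation: the matrix monoid generated by the images of the
  generators (for a finite group this equals the group generated by them).\<close>
inductive_set mat_gen :: "nat \<Rightarrow> 'a::semiring_1 mat set \<Rightarrow> 'a mat set"
  for d :: nat and gens :: "'a mat set" where
  one: "1\<^sub>m d \<in> mat_gen d gens"
| gen: "g \<in> gens \<Longrightarrow> g \<in> mat_gen d gens"
| mult: "g \<in> mat_gen d gens \<Longrightarrow> h \<in> mat_gen d gens \<Longrightarrow> g * h \<in> mat_gen d gens"

definition realizable_over :: "'a::field set \<Rightarrow> nat \<Rightarrow> 'a mat set \<Rightarrow> bool" where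
  "realizable_over F d S \<longleftrightarrow>
     (\<exists>P Q. P \<in> carrier_mat d d \<and> Q \<in> carrier_mat d d \<and> P * Q = 1\<^sub>m d \<and> Q * P = 1\<^sub>m d \<and>
        (\<forall>M\<in>S. \<forall>i<d. \<forall>j<d. (Q * M * P) $$ (i, j) \<in> F))"

definition rep_a :: "nat \<Rightarrow> int \<Rightarrow> 'a::field \<Rightarrow> 'a mat" where
  "rep_a t k z = mat t t (\<lambda>(i, j). if i = j then z powi (k ^ i) else 0)"

definition rep_b :: "nat \<Rightarrow> 'a::field \<Rightarrow> 'a mat" where
  "rep_b t e = mat t t (\<lambda>(i, j). if i = j + 1 then 1 else if i = 0 \<and> j = t - 1 then e else 0)"

end

theory Submission
  imports Defs "Jordan_Normal_Form.Determinant"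
begin

(* Write Fr for the entrywise q-th power map on matrices over the algebraic closure;
   it is multiplicative, and its fixed entries are exactly F_q.  If an invertible V
   satisfies Fr(V) = V W and every matrix M of the representation satisfies
   W Fr(M) = M W, then V M V^-1 is fixed by Fr, i.e. has entries in F_q.

   For the representation a -> diag(Z 0, ..., Z (t-1)), b -> rep_b t e we take
   W = (rep_b t e)^j and V the "twisted Vandermonde" matrix with entries
   A i * (Z i)^p, where Z x = zeta^(k^x) and A is a nowhere-vanishing sequence with
   A (x + t) = e * A x and A (x + j) = (A x)^q.  Invertibility of V is a Vandermonde
   argument (the Z i are distinct); the sequence A is built from a root of
   z^(q^L) = e^J z, using coordinates w = a J + b L for coprime J, L. *)


abbreviation frob_mat :: "nat \<Rightarrow> 'a::comm_semiring_1 mat \<Rightarrow> 'a mat" where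
  "frob_mat q \<equiv> map_mat (\<lambda>x. x ^ q)"

lemma prime_power_frobenius:
  assumes p: "Factorial_Ring.prime CHAR('a::comm_semiring_1)"
    and q: "q = CHAR('a) ^ d" and d: "d \<ge> 1"
  shows "semiring_hom (\<lambda>x :: 'a. x ^ q)" and "q \<ge> 2"
proof -
  have "CHAR('a) ^ 1 \<le> CHAR('a) ^ d"
    using d prime_gt_0_nat[OF p] by (intro power_increasing) auto
  then show "q \<ge> 2" using q prime_ge_2_nat[OF p] by simp
  then show "semiring_hom (\<lambda>x :: 'a. x ^ q)"
    by unfold_locales (simp_all add: freshmans_dream'[OF p q] power_mult_distrib power_0_left)
qed

lemma frobenius_descent:
  fixes V V' W :: "'a::field mat"
  assumes frob: "semiring_hom (\<lambda>x :: 'a. x ^ q)"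
    and V: "V \<in> carrier_mat t t" and V': "V' \<in> carrier_mat t t"
    and VV': "V * V' = 1\<^sub>m t" and V'V: "V' * V = 1\<^sub>m t"
    and W: "W \<in> carrier_mat t t" and frob_V: "frob_mat q V = V * W"
    and intertwined: "\<And>M. M \<in> S \<Longrightarrow> M \<in> carrier_mat t t \<and> W * frob_mat q M = M * W"
  shows "realizable_over (finite_subfield q) t S"
proof -
  interpret frobenius: semiring_hom "\<lambda>x :: 'a. x ^ q" by (rule frob)
  have frob_V': "frob_mat q V' \<in> carrier_mat t t" using V' by simp
  have WV': "W * frob_mat q V' \<in> carrier_mat t t" using W frob_V' by simp
  (* Applying Fr to V V' = 1 shows that W Fr(V') = V'. *)
  have "V * (W * frob_mat q V') = V * W * frob_mat q V'"
    by (rule assoc_mult_mat[OF V W frob_V', symmetric])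
  also have "\<dots> = frob_mat q (V * V')"
    by (simp add: frobenius.mat_hom_mult[OF V V'] frob_V)
  also have "\<dots> = 1\<^sub>m t" by (simp add: VV' frobenius.mat_hom_one)
  finally have V_WV': "V * (W * frob_mat q V') = 1\<^sub>m t" .
  have W_V': "W * frob_mat q V' = V'"
  proof -
    have "W * frob_mat q V' = (V' * V) * (W * frob_mat q V')"
      by (simp add: V'V left_mult_one_mat[OF WV'])
    also have "\<dots> = V' * (V * (W * frob_mat q V'))" by (rule assoc_mult_mat[OF V' V WV'])
    also have "\<dots> = V'" using V' by (simp add: V_WV')
    finally show ?thesis .
  qed
  have fixed: "frob_mat q (V * M * V') = V * M * V'" if M: "M \<in> S" for M
  proof -
    have M_car: "M \<in> carrier_mat t t" and W_M: "W * frob_mat q M = M * W"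
      using intertwined[OF M] by auto
    have frob_M: "frob_mat q M \<in> carrier_mat t t" using M_car by simp
    have VM: "V * M \<in> carrier_mat t t" using V M_car by simp
    have "frob_mat q (V * M * V') = V * W * frob_mat q M * frob_mat q V'"
      by (simp add: frobenius.mat_hom_mult[OF VM V'] frobenius.mat_hom_mult[OF V M_car] frob_V)
    also have "V * W * frob_mat q M = V * M * W"
      by (simp add: assoc_mult_mat[OF V W frob_M] assoc_mult_mat[OF V M_car W] W_M)
    also have "V * M * W * frob_mat q V' = V * M * (W * frob_mat q V')"
      by (rule assoc_mult_mat[OF VM W frob_V'])
    finally show ?thesis by (simp add: W_V')
  qed
  show ?thesis
    unfolding realizable_over_def
  proof (rule exI[of _ V'], rule exI[of _ V], intro conjI ballI allI impI)
    fix M i l assume M: "M \<in> S" and i: "i < t" and l: "l < t"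
    have VMV': "V * M * V' \<in> carrier_mat t t" using V V' intertwined[OF M] by auto
    have "((V * M * V') $$ (i, l)) ^ q = frob_mat q (V * M * V') $$ (i, l)"
      using carrier_matD[OF VMV'] i l by simp
    also have "\<dots> = (V * M * V') $$ (i, l)" by (simp add: fixed[OF M])
    finally show "(V * M * V') $$ (i, l) \<in> finite_subfield q" by (simp add: finite_subfield_def)
  qed (use V V' VV' V'V in auto)
qed

lemma mat_gen_intertwined:
  fixes W :: "'a::field mat"
  assumes frob: "semiring_hom (\<lambda>x :: 'a. x ^ q)" and W: "W \<in> carrier_mat t t"
    and gens: "\<And>g. g \<in> gens \<Longrightarrow> g \<in> carrier_mat t t \<and> W * frob_mat q g = g * W"
    and M: "M \<in> mat_gen t gens"
  shows "M \<in> carrier_mat t t \<and> W * frob_mat q M = M * W"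
  using M
proof (induction rule: mat_gen.induct)
  case one
  show ?case using W semiring_hom.mat_hom_one[OF frob] by simp
next
  case (gen g)
  then show ?case by (rule gens)
next
  case (mult g h)
  then have g: "g \<in> carrier_mat t t" "W * frob_mat q g = g * W"
    and h: "h \<in> carrier_mat t t" "W * frob_mat q h = h * W" by auto
  have frob_g: "frob_mat q g \<in> carrier_mat t t" and frob_h: "frob_mat q h \<in> carrier_mat t t"
    using g(1) h(1) by simp_all
  have "W * frob_mat q (g * h) = (W * frob_mat q g) * frob_mat q h"
    by (simp add: semiring_hom.mat_hom_mult[OF frob g(1) h(1)] assoc_mult_mat[OF W frob_g frob_h])
  also have "\<dots> = g * (W * frob_mat q h)"
    by (simp add: g(2) assoc_mult_mat[OF g(1) W frob_h])
  also have "\<dots> = (g * h) * W"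
    by (simp add: h(2) assoc_mult_mat[OF g(1) h(1) W])
  finally show ?case using g(1) h(1) by simp
qed

lemma rep_b_carrier [simp]: "rep_b t e \<in> carrier_mat t t"
  and rep_b_dim [simp]: "dim_row (rep_b t e) = t" "dim_col (rep_b t e) = t"
  by (simp_all add: rep_b_def)

lemma mult_rep_b_entry:
  fixes Y :: "'a::field mat"
  assumes Y: "Y \<in> carrier_mat t t" and Y_cols: "\<And>p i. p < t \<Longrightarrow> i < t \<Longrightarrow> Y $$ (p, i) = G p i"
    and G_twist: "\<And>p x. G p (x + t) = e * G p x" and p: "p < t" and i: "i < t"
  shows "(Y * rep_b t e) $$ (p, i) = G p (i + 1)"
proof -
  have "(Y * rep_b t e) $$ (p, i) = (\<Sum>l\<in>{0..<t}. Y $$ (p, l) * rep_b t e $$ (l, i))"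
    using Y p i by (auto simp: scalar_prod_def rep_b_def)
  also have "\<dots> = (\<Sum>l\<in>{0..<t}. if l = (if i + 1 < t then i + 1 else 0)
      then (if i + 1 < t then G p (i + 1) else e * G p 0) else 0)"
    using i p by (intro sum.cong refl) (auto simp: rep_b_def Y_cols)
  also have "\<dots> = G p (i + 1)"
  proof (cases "i + 1 < t")
    case False
    then have "i + 1 = t" using i by simp
    then show ?thesis using G_twist[of p 0] by auto
  qed auto
  finally show ?thesis .
qed

lemma mult_rep_b_pow_entry:
  fixes Y :: "'a::field mat"
  assumes Y: "Y \<in> carrier_mat t t" and Y_cols: "\<And>p i. p < t \<Longrightarrow> i < t \<Longrightarrow> Y $$ (p, i) = G p i"
    and G_twist: "\<And>p x. G p (x + t) = e * G p x"
  shows "p < t \<Longrightarrow> i < t \<Longrightarrow> (Y * rep_b t e ^\<^sub>m j) $$ (p, i) = G p (i + j)"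
proof (induction j arbitrary: p i)
  case 0
  then show ?case using Y Y_cols by (simp add: rep_b_def)
next
  case (Suc j)
  have B_j: "rep_b t e ^\<^sub>m j \<in> carrier_mat t t" by simp
  have "Y * rep_b t e ^\<^sub>m Suc j = (Y * rep_b t e ^\<^sub>m j) * rep_b t e"
    using Y B_j by (simp add: assoc_mult_mat[symmetric, of Y t t _ t _ t])
  also have "\<dots> $$ (p, i) = G p (i + 1 + j)"
  proof (rule mult_rep_b_entry[where G = "\<lambda>p x. G p (x + j)"])
    show "G p (x + t + j) = e * G p (x + j)" for p x
      using G_twist[of p "x + j"] by (simp add: add.commute add.left_commute)
  qed (use Y B_j Suc in \<open>auto simp: add.commute add.left_commute\<close>)
  finally show ?case by simp
qed

lemma rep_b_pow_entry:
  fixes e :: "'a::field"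
  assumes "t > 0" and "p < t" and "i < t"
  shows "(rep_b t e ^\<^sub>m j) $$ (p, i) = (if p = (i + j) mod t then e ^ ((i + j) div t) else 0)"
proof -
  have "(1\<^sub>m t * rep_b t e ^\<^sub>m j) $$ (p, i) = (if p = (i + j) mod t then e ^ ((i + j) div t) else 0)"
    by (rule mult_rep_b_pow_entry[where G = "\<lambda>p x. if p = x mod t then e ^ (x div t) else 0"])
      (use assms in auto)
  then show ?thesis by (simp only: left_mult_one_mat[OF pow_carrier_mat[OF rep_b_carrier]])
qed

lemma periodic_mod:
  fixes f :: "nat \<Rightarrow> 'a" and t :: nat
  assumes "\<And>x. f (x + t) = f x"
  shows "f (x mod t) = f x"
proof -
  have "f (x mod t + t * n) = f (x mod t)" for n
  proof (induction n)
    case (Suc n)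
    have "x mod t + t * Suc n = (x mod t + t * n) + t" by simp
    then show ?case using assms Suc.IH by metis
  qed simp
  from this[of "x div t"] show ?thesis by simp
qed

lemma rep_b_pow_intertwines_diag:
  fixes Z :: "nat \<Rightarrow> 'a::field"
  assumes t: "t > 0" and q: "q > 0"
    and Z_per: "\<And>x. Z (x + t) = Z x" and Z_frob: "\<And>x. Z (x + j) = Z x ^ q"
  shows "rep_b t e ^\<^sub>m j * frob_mat q (mat_diag t Z) = mat_diag t Z * rep_b t e ^\<^sub>m j"
proof -
  have frob_diag: "frob_mat q (mat_diag t Z) = mat_diag t (\<lambda>i. Z i ^ q)"
    using q by (auto simp: mat_diag_def)
  have W: "rep_b t e ^\<^sub>m j \<in> carrier_mat t t" by simp
  show ?thesis
    unfolding frob_diag mat_diag_mult_left[OF W] mat_diag_mult_right[OF W]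
    by (rule eq_matI) (auto simp: rep_b_pow_entry[OF t] periodic_mod[of Z t, OF Z_per] Z_frob)
qed

lemma pow_mat_commute:
  assumes "B \<in> carrier_mat n n"
  shows "B ^\<^sub>m j * B = B * B ^\<^sub>m j"
proof (induction j)
  case (Suc j)
  have "B ^\<^sub>m Suc j * B = (B * B ^\<^sub>m j) * B" using Suc by simp
  also have "\<dots> = B * (B ^\<^sub>m j * B)" by (rule assoc_mult_mat) (use assms in auto)
  finally show ?case by simp
qed (use assms in simp)

(* If e lies in F_q then rep_b t e is Frobenius-fixed, so W intertwines it trivially. *)
lemma rep_b_pow_intertwines_rep_b:
  fixes e :: "'a::field"
  assumes "q > 0" and "e ^ q = e"
  shows "rep_b t e ^\<^sub>m j * frob_mat q (rep_b t e) = rep_b t e * rep_b t e ^\<^sub>m j"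
proof -
  have "frob_mat q (rep_b t e) = rep_b t e"
    using assms by (intro eq_matI) (auto simp: rep_b_def power_0_left)
  then show ?thesis using pow_mat_commute[OF rep_b_carrier] by simp
qed

definition twisted_vandermonde :: "nat \<Rightarrow> (nat \<Rightarrow> 'a::field) \<Rightarrow> (nat \<Rightarrow> 'a) \<Rightarrow> 'a mat" where
  "twisted_vandermonde t A Z = mat t t (\<lambda>(p, i). A i * Z i ^ p)"

lemma poly_as_sum_below:
  fixes f :: "'a::comm_semiring_1 poly"
  assumes "Polynomial.degree f < t"
  shows "poly f y = (\<Sum>p<t. Polynomial.coeff f p * y ^ p)"
proof -
  have "poly f y = (\<Sum>p\<le>Polynomial.degree f. Polynomial.coeff f p * y ^ p)" by (rule poly_altdef)
  also have "\<dots> = (\<Sum>p<t. Polynomial.coeff f p * y ^ p)"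
    using assms by (intro sum.mono_neutral_left) (auto simp: coeff_eq_0)
  finally show ?thesis .
qed

lemma poly_vanishing_off_point:
  fixes xs :: "nat \<Rightarrow> 'a::field"
  assumes inj: "inj_on xs {..<t}" and i0: "i0 < t"
  obtains f where "Polynomial.degree f < t"
    and "\<And>i. i < t \<Longrightarrow> i \<noteq> i0 \<Longrightarrow> poly f (xs i) = 0" and "poly f (xs i0) \<noteq> 0"
proof -
  define f where "f = (\<Prod>i\<in>{..<t} - {i0}. [:- xs i, 1:])"
  have "Polynomial.degree f \<le> (\<Sum>i\<in>{..<t} - {i0}. Polynomial.degree [:- xs i, 1:])"
    using degree_prod_sum_le[of "{..<t} - {i0}" "\<lambda>i. [:- xs i, 1:]"] by (simp add: f_def o_def)
  also have "\<dots> < t" using i0 by simp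
  finally have "Polynomial.degree f < t" .
  moreover have "poly f (xs i) = 0" if "i < t" "i \<noteq> i0" for i
    using that by (auto simp: f_def poly_prod)
  moreover have "poly f (xs i0) \<noteq> 0"
  proof -
    have False if "a < t" and "a \<noteq> i0" and eq: "xs i0 = xs a" for a
      using inj_onD[OF inj eq] i0 that(1,2) by simp
    then show ?thesis by (auto simp: f_def poly_prod)
  qed
  ultimately show ?thesis using that by blast
qed

(* A twisted Vandermonde matrix with distinct nodes Z i and nonzero weights A i is
   invertible: a kernel vector would make every polynomial of degree < t vanish on it. *)
lemma twisted_vandermonde_det:
  fixes A Z :: "nat \<Rightarrow> 'a::field"
  assumes inj: "inj_on Z {..<t}" and A: "\<And>i. A i \<noteq> 0"
  shows "det (twisted_vandermonde t A Z) \<noteq> 0"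
proof
  let ?V = "twisted_vandermonde t A Z"
  have V: "?V \<in> carrier_mat t t" by (simp add: twisted_vandermonde_def)
  assume "det ?V = 0"
  then obtain v where v: "v \<in> carrier_vec t" "v \<noteq> 0\<^sub>v t" "?V *\<^sub>v v = 0\<^sub>v t"
    using det_0_iff_vec_prod_zero_field[OF V] by blast
  have rows: "(\<Sum>i<t. A i * Z i ^ p * v $ i) = 0" if p: "p < t" for p
  proof -
    have "(?V *\<^sub>v v) $ p = 0" using v(3) p by simp
    then show ?thesis
      using p v(1) by (simp add: twisted_vandermonde_def scalar_prod_def lessThan_atLeast0 row_def)
  qed
  (* Pairing the rows with the coefficients of f evaluates f at the points Z i. *)
  have "v $ i0 = 0" if i0: "i0 < t" for i0
  proof -
    obtain f where deg: "Polynomial.degree f < t"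
      and vanish: "\<And>i. i < t \<Longrightarrow> i \<noteq> i0 \<Longrightarrow> poly f (Z i) = 0" and nz: "poly f (Z i0) \<noteq> 0"
      using poly_vanishing_off_point[OF inj i0] by blast
    let ?c = "Polynomial.coeff f"
    have "0 = (\<Sum>p<t. ?c p * (\<Sum>i<t. A i * Z i ^ p * v $ i))"
      by (simp add: rows)
    also have "\<dots> = (\<Sum>p<t. \<Sum>i<t. ?c p * (A i * Z i ^ p * v $ i))"
      by (simp only: sum_distrib_left)
    also have "\<dots> = (\<Sum>i<t. \<Sum>p<t. ?c p * (A i * Z i ^ p * v $ i))"
      by (rule sum.swap)
    also have "\<dots> = (\<Sum>i<t. (A i * v $ i) * (\<Sum>p<t. ?c p * Z i ^ p))"
      unfolding sum_distrib_left by (intro sum.cong refl) (simp only: mult_ac)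
    also have "\<dots> = (\<Sum>i<t. (A i * v $ i) * poly f (Z i))"
      by (simp only: poly_as_sum_below[OF deg])
    also have "\<dots> = A i0 * v $ i0 * poly f (Z i0)"
      by (subst sum.remove[of _ i0]) (use i0 vanish in auto)
    finally show ?thesis using nz A by simp
  qed
  then have "v = 0\<^sub>v t" using v(1) by (intro eq_vecI) auto
  with v(2) show False by simp
qed

lemma frob_twisted_vandermonde:
  fixes A Z :: "nat \<Rightarrow> 'a::field"
  assumes Z_per: "\<And>x. Z (x + t) = Z x" and Z_frob: "\<And>x. Z (x + j) = Z x ^ q"
    and A_per: "\<And>x. A (x + t) = e * A x" and A_frob: "\<And>x. A (x + j) = A x ^ q"
  shows "frob_mat q (twisted_vandermonde t A Z) = twisted_vandermonde t A Z * rep_b t e ^\<^sub>m j"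
proof (rule eq_matI)
  let ?V = "twisted_vandermonde t A Z"
  have V: "?V \<in> carrier_mat t t" by (simp add: twisted_vandermonde_def)
  fix p i assume "p < dim_row (?V * rep_b t e ^\<^sub>m j)" and "i < dim_col (?V * rep_b t e ^\<^sub>m j)"
  then have p: "p < t" and i: "i < t" using V by (auto split: if_split_asm)
  have "(?V * rep_b t e ^\<^sub>m j) $$ (p, i) = A (i + j) * Z (i + j) ^ p"
    by (rule mult_rep_b_pow_entry[OF V, where G = "\<lambda>p x. A x * Z x ^ p"])
      (auto simp: twisted_vandermonde_def A_per Z_per p i)
  also have "\<dots> = frob_mat q ?V $$ (p, i)"
    using p i by (simp add: twisted_vandermonde_def A_frob Z_frob power_mult_distrib
        flip: power_mult) (simp add: mult.commute)
  finally show "frob_mat q ?V $$ (p, i) = (?V * rep_b t e ^\<^sub>m j) $$ (p, i)" by simp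
qed (simp_all add: twisted_vandermonde_def)

lemma realizable_twisted_diagonal:
  fixes Z A :: "nat \<Rightarrow> 'a::field" and e :: 'a
  assumes frob: "semiring_hom (\<lambda>x :: 'a. x ^ q)" and t: "t > 0"
    and Z_inj: "inj_on Z {..<t}" and Z_per: "\<And>x. Z (x + t) = Z x"
    and Z_frob: "\<And>x. Z (x + j) = Z x ^ q"
    and A_nz: "\<And>x. A x \<noteq> 0" and A_per: "\<And>x. A (x + t) = e * A x"
    and A_frob: "\<And>x. A (x + j) = A x ^ q" and e_frob: "e ^ q = e"
  shows "realizable_over (finite_subfield q) t (mat_gen t {mat_diag t Z, rep_b t e})"
proof -
  interpret frobenius: semiring_hom "\<lambda>x :: 'a. x ^ q" by (rule frob)
  have q: "q > 0" using frobenius.hom_zero by (cases q) auto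
  define V where "V = twisted_vandermonde t A Z"
  define W where "W = rep_b t e ^\<^sub>m j"
  have V: "V \<in> carrier_mat t t" and W: "W \<in> carrier_mat t t"
    by (simp_all add: V_def W_def twisted_vandermonde_def)
  have "det V \<noteq> 0" unfolding V_def by (rule twisted_vandermonde_det[OF Z_inj A_nz])
  then obtain V' where V': "V' \<in> carrier_mat t t" "V * V' = 1\<^sub>m t" "V' * V = 1\<^sub>m t"
    using det_non_zero_imp_unit[OF V, of "()"] by (auto simp: Units_def ring_mat_def)
  have gens: "g \<in> carrier_mat t t \<and> W * frob_mat q g = g * W" if "g \<in> {mat_diag t Z, rep_b t e}" for g
    using that rep_b_pow_intertwines_diag[OF t q Z_per Z_frob] rep_b_pow_intertwines_rep_b[OF q e_frob]
    by (auto simp: W_def)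
  have intertwined: "M \<in> carrier_mat t t \<and> W * frob_mat q M = M * W"
    if "M \<in> mat_gen t {mat_diag t Z, rep_b t e}" for M
    using gens that by (rule mat_gen_intertwined[OF frob W])
  show ?thesis
  proof (rule frobenius_descent[OF frob V V' W])
    show "frob_mat q V = V * W"
      unfolding V_def W_def by (rule frob_twisted_vandermonde[OF Z_per Z_frob A_per A_frob])
  qed (rule intertwined)
qed

lemma power_int_fixed:
  fixes e :: "'a::field"
  assumes "e ^ q = e"
  shows "(e powi b) ^ q = e powi b"
proof -
  have "(e powi b) ^ q = e powi (b * int q)" by (rule power_int_power')
  also have "\<dots> = (e ^ q) powi b" by (simp add: power_int_power mult.commute)
  finally show ?thesis by (simp add: assms)
qed

lemma frobenius_twisted_root:
  fixes c :: "'a::alg_closed_field"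
  assumes c: "c \<noteq> 0" and q: "q \<ge> 2" and L: "L > 0"
  obtains z where "z \<noteq> 0" and "z ^ (q ^ L) = c * z"
proof -
  have "q ^ L \<ge> q ^ 1" using q L by (intro power_increasing) auto
  then have N: "q ^ L = Suc (q ^ L - 1)" "q ^ L - 1 > 0" using q by auto
  obtain z :: 'a where z: "z ^ (q ^ L - 1) = c" using nth_root_exists[OF N(2)] by blast
  have "z \<noteq> 0" using z c N(2) by (cases "z = 0") (auto simp: power_0_left)
  moreover have "z ^ (q ^ L) = c * z" using z by (subst N(1)) (simp add: mult.commute)
  ultimately show ?thesis using that by blast
qed

lemma coprime_coordinates:
  fixes J L :: nat
  assumes cop: "coprime J L" and L: "L > 0"
  obtains a :: "nat \<Rightarrow> nat" and b :: "nat \<Rightarrow> int"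
    where "\<And>w. a w < L" and "\<And>w. int w = int (a w) * int J + int L * b w"
proof -
  obtain u v :: int where "u * int J + v * int L = gcd (int J) (int L)"
    using bezout_int[of "int J" "int L"] by blast
  then have uv: "u * int J + v * int L = 1" using coprime_imp_gcd_eq_1[OF cop] by simp
  define a where "a w = nat ((int w * u) mod int L)" for w
  define b where "b w = (int w * u) div int L * int J + int w * v" for w
  have "a w < L" for w using L by (simp add: a_def nat_less_iff)
  moreover have "int w = int (a w) * int J + int L * b w" for w
  proof -
    define r where "r = (int w * u) mod int L"
    define d where "d = (int w * u) div int L"
    have a_r: "int (a w) = r" using L by (simp add: a_def r_def)
    have w_u: "int w * u = r + int L * d" by (simp add: r_def d_def)
    have "int (a w) * int J + int L * b w = (r + int L * d) * int J + int L * (int w * v)"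
      by (simp add: a_r b_def d_def algebra_simps)
    also have "\<dots> = int w * (u * int J + v * int L)"
      by (simp only: w_u[symmetric]) (simp add: algebra_simps)
    finally show ?thesis using uv by simp
  qed
  ultimately show ?thesis using that by blast
qed

lemma coprime_coordinates_unique:
  fixes J L a a' :: nat and b b' :: int
  assumes cop: "coprime J L" and a: "a < L" and a': "a' < L"
    and eq: "int a * int J + int L * b = int a' * int J + int L * b'"
  shows "a = a'" and "b = b'"
proof -
  have "int L dvd (int a - int a') * int J"
  proof
    show "(int a - int a') * int J = int L * (b' - b)" using eq by (simp add: algebra_simps)
  qed
  then have "int L dvd int a - int a'"
    using cop by (subst (asm) coprime_dvd_mult_left_iff) (simp_all add: coprime_commute)
  moreover have "\<bar>int a - int a'\<bar> < int L" using a a' by simp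
  ultimately have "int a - int a' = 0"
    using dvd_imp_le_int[of "int a - int a'" "int L"] by (cases "int a - int a' = 0") auto
  then show "a = a'" by simp
  then show "b = b'" using eq a by simp
qed

(* The twisted sequence for coprime shifts: H w = z^(q^a) e^b in the coordinates
   w = a J + b L, with z^(q^L) = e^J z. *)
lemma twisted_sequence_coprime:
  fixes e :: "'a::alg_closed_field" and J L q :: nat
  assumes cop: "coprime J L" and L: "L > 0" and e0: "e \<noteq> 0" and e_frob: "e ^ q = e"
    and q: "q \<ge> 2"
  obtains H :: "nat \<Rightarrow> 'a"
    where "\<And>w. H w \<noteq> 0" and "\<And>w. H (w + L) = e * H w" and "\<And>w. H (w + J) = H w ^ q"
proof -
  obtain a b where a_lt: "\<And>w. a w < L" and ab: "\<And>w. int w = int (a w) * int J + int L * b w"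
    using coprime_coordinates[OF cop L] by blast
  obtain z :: 'a where z0: "z \<noteq> 0" and z: "z ^ (q ^ L) = e ^ J * z"
    using frobenius_twisted_root[of "e ^ J" q L] e0 q L by auto
  define H where "H w = z ^ (q ^ a w) * e powi b w" for w
  have H_coord: "H w = z ^ (q ^ a') * e powi b'"
    if "a' < L" and "int w = int a' * int J + int L * b'" for w a' b'
  proof -
    have "int (a w) * int J + int L * b w = int a' * int J + int L * b'"
      using ab[of w] that(2) by simp
    then have "a w = a'" and "b w = b'"
      using coprime_coordinates_unique[OF cop a_lt[of w] that(1)] by simp_all
    then show ?thesis by (simp add: H_def)
  qed
  have "H w \<noteq> 0" for w using z0 e0 by (simp add: H_def)
  moreover have "H (w + L) = e * H w" for w
  proof -
    have "H (w + L) = z ^ (q ^ a w) * e powi (b w + 1)"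
      by (rule H_coord) (use a_lt ab[of w] in \<open>simp_all add: algebra_simps\<close>)
    then show ?thesis using e0 by (simp add: H_def power_int_add mult_ac)
  qed
  moreover have "H (w + J) = H w ^ q" for w
  proof (cases "a w + 1 < L")
    case True
    have "H (w + J) = z ^ (q ^ (a w + 1)) * e powi b w"
      by (rule H_coord) (use True ab[of w] in \<open>simp_all add: algebra_simps\<close>)
    also have "z ^ (q ^ (a w + 1)) = (z ^ (q ^ a w)) ^ q"
      by (simp add: power_mult[symmetric] power_add mult.commute)
    finally show ?thesis by (simp add: H_def power_mult_distrib power_int_fixed[OF e_frob])
  next
    case False
    (* Passing from coordinate a = L - 1 to a = 0 produces the factor e^J. *)
    then have L_Suc: "L = Suc (a w)" using a_lt[of w] by simp
    then have aw: "int L = int (a w) + 1" by simp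
    have "H (w + J) = z ^ (q ^ 0) * e powi (b w + int J)"
      by (rule H_coord) (use L aw ab[of w] in \<open>simp_all add: algebra_simps\<close>)
    also have "\<dots> = e ^ J * z * e powi b w" using e0 by (simp add: power_int_add mult_ac)
    also have "\<dots> = z ^ (q ^ L) * e powi b w" by (simp add: z)
    also have "q ^ L = q ^ a w * q" by (simp add: L_Suc power_Suc2)
    finally show ?thesis
      by (simp add: H_def power_mult_distrib power_int_fixed[OF e_frob] power_mult)
  qed
  ultimately show ?thesis using that by blast
qed

(* A nowhere-vanishing sequence with A (x + t) = e A x and A (x + j) = (A x)^q, obtained
   from the coprime case after dividing t and j by their gcd. *)
lemma twisted_sequence:
  fixes e :: "'a::alg_closed_field" and t j q :: nat
  assumes t: "t > 0" and e0: "e \<noteq> 0" and e_frob: "e ^ q = e" and q: "q \<ge> 2"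
  obtains A :: "nat \<Rightarrow> 'a"
    where "\<And>x. A x \<noteq> 0" and "\<And>x. A (x + t) = e * A x" and "\<And>x. A (x + j) = A x ^ q"
proof -
  define g where "g = gcd j t"
  define J where "J = j div g"
  define L where "L = t div g"
  have g: "g > 0" using t by (simp add: g_def)
  have jJ: "j = g * J" and tL: "t = g * L" by (simp_all add: g_def J_def L_def)
  have L: "L > 0" using t tL by (cases L) auto
  have "coprime J L" unfolding J_def L_def g_def using t by (intro div_gcd_coprime) auto
  then obtain H :: "nat \<Rightarrow> 'a"
    where H: "\<And>w. H w \<noteq> 0" "\<And>w. H (w + L) = e * H w" "\<And>w. H (w + J) = H w ^ q"
    using twisted_sequence_coprime[OF _ L e0 e_frob q] by blast
  have "(x + t) div g = x div g + L" and "(x + j) div g = x div g + J" for x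
    using g tL jJ by simp_all
  then show ?thesis using that[of "\<lambda>x. H (x div g)"] H by simp
qed

lemma root_of_unity_power_mod:
  fixes z :: "'a::monoid_mult"
  assumes "z ^ m = 1"
  shows "z ^ a = z ^ (a mod m)"
proof -
  have "z ^ a = (z ^ m) ^ (a div m) * z ^ (a mod m)"
    by (simp flip: power_mult power_add)
  then show ?thesis using assms by simp
qed

lemma root_of_unity_power_int:
  fixes z :: "'a::field"
  assumes z: "z ^ m = 1" and m: "m > 0"
  shows "z powi a = z ^ nat (a mod int m)"
proof -
  have z0: "z \<noteq> 0" using assms by (cases "z = 0") (auto simp: power_0_left)
  have "z powi a = z powi (int m * (a div int m)) * z powi (a mod int m)"
    using z0 by (simp flip: power_int_add)
  also have "z powi (int m * (a div int m)) = 1"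
    by (simp add: power_int_mult z)
  also have "a mod int m = int (nat (a mod int m))" using m by simp
  finally show ?thesis by (metis mult_1 power_int_of_nat)
qed

lemma inj_on_lessThanI:
  fixes f :: "nat \<Rightarrow> 'a" and n :: nat
  assumes "\<And>x y. x \<le> y \<Longrightarrow> y < n \<Longrightarrow> f x = f y \<Longrightarrow> x = y"
  shows "inj_on f {..<n}"
proof (rule inj_onI)
  fix x y assume "x \<in> {..<n}" and "y \<in> {..<n}" and "f x = f y"
  then show "x = y" using nat_le_linear[of x y] assms[of x y] assms[of y x] by auto
qed

lemma primitive_root_power_inj:
  fixes z :: "'a::field"
  assumes prim: "primitive_root_of_unity m z"
  shows "inj_on (\<lambda>a. z ^ a) {..<m}"
proof (rule inj_on_lessThanI)
  fix a b assume ab: "a \<le> b" "b < m" "z ^ a = z ^ b"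
  show "a = b"
  proof (rule ccontr)
    assume "a \<noteq> b"
    have "z \<noteq> 0" using prim ab by (auto simp: primitive_root_of_unity_def power_0_left)
    moreover have "z ^ a * z ^ (b - a) = z ^ b" using ab(1) by (simp flip: power_add)
    then have "z ^ a * z ^ (b - a) = z ^ a * 1" using ab(3) by simp
    ultimately have "z ^ (b - a) = 1" by simp
    with prim \<open>a \<noteq> b\<close> ab show False by (auto simp: primitive_root_of_unity_def)
  qed
qed

(* The diagonal entries zeta^(K^x) of rep_a, reduced modulo m. *)
definition power_orbit :: "nat \<Rightarrow> nat \<Rightarrow> 'a::field \<Rightarrow> nat \<Rightarrow> 'a" where
  "power_orbit m K \<zeta> x = \<zeta> ^ (K ^ x mod m)"

lemma power_orbit_periodic:
  assumes "[K ^ t = 1] (mod m)"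
  shows "power_orbit m K \<zeta> (x + t) = power_orbit m K \<zeta> x"
proof -
  have "[K ^ x * K ^ t = K ^ x * 1] (mod m)" by (intro cong_mult cong_refl assms)
  then show ?thesis by (simp add: power_orbit_def power_add cong_def)
qed

lemma power_orbit_frobenius:
  fixes \<zeta> :: "'a::field"
  assumes \<zeta>: "\<zeta> ^ m = 1" and qK: "[q = K ^ j] (mod m)"
  shows "power_orbit m K \<zeta> (x + j) = power_orbit m K \<zeta> x ^ q"
proof -
  have "[(K ^ x mod m) * q = K ^ x * K ^ j] (mod m)"
    by (intro cong_mult qK) (simp add: cong_def)
  then have "(K ^ x mod m) * q mod m = K ^ (x + j) mod m" by (simp add: cong_def power_add)
  then show ?thesis
    using root_of_unity_power_mod[OF \<zeta>, of "(K ^ x mod m) * q"]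
    by (simp add: power_orbit_def power_mult)
qed

(* Within one period the orbit has no repetitions, since K has order exactly t mod m. *)
lemma power_orbit_inj:
  fixes \<zeta> :: "'a::field"
  assumes prim: "primitive_root_of_unity m \<zeta>" and m: "m > 0"
    and t: "t = ord m K" and t_pos: "t > 0"
  shows "inj_on (power_orbit m K \<zeta>) {..<t}"
proof -
  have cop: "coprime m K" using t t_pos ord_gt_0_iff by simp
  show ?thesis
  proof (rule inj_on_lessThanI)
    fix x y assume xy: "x \<le> y" "y < t" "power_orbit m K \<zeta> x = power_orbit m K \<zeta> y"
    have "K ^ x mod m = K ^ y mod m"
      using primitive_root_power_inj[OF prim] m xy(3)
      by (auto simp: power_orbit_def inj_on_def)
    then have "[K ^ x * 1 = K ^ x * K ^ (y - x)] (mod m)"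
      using xy by (simp add: cong_def flip: power_add)
    then have "[K ^ (y - x) = 1] (mod m)"
      using cop by (subst (asm) cong_mult_lcancel_nat) (auto simp: coprime_commute cong_sym_eq)
    then have "t dvd y - x" unfolding t by (simp add: ord_divides')
    with xy show "x = y" by (cases "y - x = 0") (auto dest: dvd_imp_le)
  qed
qed

lemma power_mod_residue:
  fixes k :: int
  assumes "m \<ge> 1"
  shows "k ^ i mod int m = int (nat (k mod int m) ^ i mod m)"
proof -
  define K where "K = nat (k mod int m)"
  have K: "int K = k mod int m" using assms by (simp add: K_def)
  have "int (K ^ i mod m) = (k mod int m) ^ i mod int m"
    by (simp add: of_nat_mod K[symmetric])
  also have "\<dots> = k ^ i mod int m" by (simp add: power_mod)
  finally show ?thesis by (simp add: K_def)
qed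

lemma cong_power_residue:
  fixes k :: int
  assumes "m \<ge> 1" and "[int q = k ^ j] (mod int m)"
  shows "[q = nat (k mod int m) ^ j] (mod m)"
proof -
  have "int (q mod m) = int (nat (k mod int m) ^ j mod m)"
    using assms power_mod_residue[OF assms(1), of k j] by (simp add: cong_def of_nat_mod)
  then show ?thesis by (simp add: cong_def)
qed

lemma rep_a_eq_power_orbit:
  fixes \<zeta> :: "'a::field" and k :: int
  assumes m: "m \<ge> 1" and \<zeta>: "\<zeta> ^ m = 1"
  shows "rep_a t k \<zeta> = mat_diag t (power_orbit m (nat (k mod int m)) \<zeta>)"
proof (rule eq_matI)
  fix i l assume "i < dim_row (mat_diag t (power_orbit m (nat (k mod int m)) \<zeta>))"
    and "l < dim_col (mat_diag t (power_orbit m (nat (k mod int m)) \<zeta>))"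
  then have i: "i < t" and l: "l < t" by (simp_all add: mat_diag_def)
  have "\<zeta> powi (k ^ i) = \<zeta> ^ nat (k ^ i mod int m)"
    by (rule root_of_unity_power_int[OF \<zeta>]) (use m in simp)
  also have "nat (k ^ i mod int m) = nat (k mod int m) ^ i mod m"
    by (simp add: power_mod_residue[OF m])
  finally have diagonal: "\<zeta> powi (k ^ i) = power_orbit m (nat (k mod int m)) \<zeta> i"
    by (simp add: power_orbit_def)
  show "rep_a t k \<zeta> $$ (i, l) = mat_diag t (power_orbit m (nat (k mod int m)) \<zeta>) $$ (i, l)"
  proof (cases "i = l")
    case True
    then show ?thesis using diagonal i by (simp add: rep_a_def mat_diag_def True[symmetric])
  qed (use i l in \<open>simp add: rep_a_def mat_diag_def\<close>)
qed (simp_all add: rep_a_def mat_diag_def)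

theorem theorem4p5:
  fixes m n t r q j :: nat and k c :: int
    and \<zeta> \<eta> :: "'s::prime_card mod_ring alg_closure"
  assumes "m \<ge> 1" and "n \<ge> 1"
    and "[k ^ n = 1] (mod int m)"
    and "t = ord m (nat (k mod int m))"
    and "n = r * t"
    and "coprime CARD('s) m"
    and "primitive_root_of_unity m \<zeta>"
    and "\<exists>e\<ge>1. q = CARD('s) ^ e"
    and "[int q = k ^ j] (mod int m)"
    and "\<eta> \<in> finite_subfield q" and "primitive_root_of_unity r \<eta>"
  shows "realizable_over (finite_subfield q) t
           (mat_gen t {rep_a t k \<zeta>, rep_b t (\<eta> powi c)})"
proof -
  define K where "K = nat (k mod int m)"
  define e where "e = \<eta> powi c"
  have t_pos: "t > 0" and r_pos: "r > 0" using assms(2,5) by auto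
  have char: "Factorial_Ring.prime CHAR('s mod_ring alg_closure)"
    "CHAR('s mod_ring alg_closure) = CARD('s)" using prime_card by simp_all
  obtain d where d: "q = CHAR('s mod_ring alg_closure) ^ d" "d \<ge> 1" using assms(8) char(2) by auto
  note frob = prime_power_frobenius(1)[OF char(1) d] and q = prime_power_frobenius(2)[OF char(1) d]
  have \<zeta>: "\<zeta> ^ m = 1" using assms(7) by (simp add: primitive_root_of_unity_def)
  have "\<eta> \<noteq> 0" using assms(11) r_pos by (auto simp: primitive_root_of_unity_def power_0_left)
  then have e0: "e \<noteq> 0" and e_frob: "e ^ q = e"
    using assms(10) power_int_fixed[of \<eta> q c] by (simp_all add: e_def finite_subfield_def)
  obtain A where A: "\<And>x. A x \<noteq> 0" "\<And>x. A (x + t) = e * A x" "\<And>x. A (x + j) = A x ^ q"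
    using twisted_sequence[OF t_pos e0 e_frob q] by blast
  have K_ord: "[K ^ t = 1] (mod m)" using assms(4) ord_works[of K m] by (simp add: K_def)
  have qK: "[q = K ^ j] (mod m)" using cong_power_residue[OF assms(1,9)] by (simp add: K_def)
  have inj: "inj_on (power_orbit m K \<zeta>) {..<t}"
    using power_orbit_inj[OF assms(7)] assms(1,4) t_pos by (simp add: K_def)
  have "realizable_over (finite_subfield q) t
      (mat_gen t {mat_diag t (power_orbit m K \<zeta>), rep_b t e})"
    by (rule realizable_twisted_diagonal[OF frob t_pos inj power_orbit_periodic[OF K_ord]
        power_orbit_frobenius[OF \<zeta> qK] A e_frob])
  then show ?thesis using rep_a_eq_power_orbit[OF assms(1) \<zeta>] by (simp add: K_def e_def)
qed

end
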